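(* Let $\mathbf d\in\mathbb Z^{\Delta_0}$. Then $\langle\mathbf d,\mathbf d\rangle\ge-\delta\,(d_0-d_\infty)^2$. Moreover, equality holds if and only if $d_{i,j}=\frac{1}{m_i}\bigl((m_i-j)d_0+j\,d_\infty\bigr)$ for all $i\in[1,n]$ and $j\in[1,m_i-1]$.
   Context: $[a,b]=\{l\in\mathbb Z:a\le l\le b\}$. Fix $n\ge3$ and integers $m_1,\dots,m_n\ge2$. $\Delta_0=\{0,\infty\}\cup\{(i,j):i\in[1,n],j\in[1,m_i-1]\}$ (the vertex set of the quiver of the canonical algebra of type $(m_1,\dots,m_n)$). For $\mathbf d\in\mathbb Z^{\Delta_0}$ write $d_{i,0}=d_0$, $d_{i,m_i}=d_\infty$, $d_{i,j}=d_{(i,j)}$. The Ringel form is $\langle\mathbf d',\mathbf d''\rangle=d_0'd_0''+\sum_{i\in[1,n],j\in[1,m_i-1]}d'_{i,j}d''_{i,j}+d'_\infty d''_\infty-\sum_{i\in[1,n],j\in[1,m_i]}d'_{i,j}d''_{i,j-1}+(n-2)d'_\infty d''_0$. Set $\delta=\frac12\bigl(n-2-\frac1{m_1}-\cdots-\frac1{m_n}\bigr)$. *)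

theory Defs
  imports Complex_Main
begin

text \<open>Vertices of the quiver of the canonical algebra: 0, infinity, and (i,j).\<close>
datatype vertex = V0 | VInf | Arm nat nat

definition Delta0 :: "nat \<Rightarrow> (nat \<Rightarrow> nat) \<Rightarrow> vertex set" where
  "Delta0 n m = {V0, VInf} \<union> {Arm i j | i j. 1 \<le> i \<and> i \<le> n \<and> 1 \<le> j \<and> j \<le> m i - 1}"

text \<open>Convention d_{i,0} = d_0, d_{i,m_i} = d_infty, d_{i,j} = d_(i,j).\<close>
definition dcoord :: "(nat \<Rightarrow> nat) \<Rightarrow> (vertex \<Rightarrow> int) \<Rightarrow> nat \<Rightarrow> nat \<Rightarrow> int" where
  "dcoord m d i j = (if j = 0 then d V0 else if j = m i then d VInf else d (Arm i j))"

definition ringel_form :: "nat \<Rightarrow> (nat \<Rightarrow> nat) \<Rightarrow> (vertex \<Rightarrow> int) \<Rightarrow> (vertex \<Rightarrow> int) \<Rightarrow> int" where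
  "ringel_form n m d' d'' =
     d' V0 * d'' V0
     + (\<Sum>i\<in>{1..n}. \<Sum>j\<in>{1..m i - 1}. d' (Arm i j) * d'' (Arm i j))
     + d' VInf * d'' VInf
     - (\<Sum>i\<in>{1..n}. \<Sum>j\<in>{1..m i}. dcoord m d' i j * dcoord m d'' i (j - 1))
     + (int n - 2) * d' VInf * d'' V0"

definition delta_can :: "nat \<Rightarrow> (nat \<Rightarrow> nat) \<Rightarrow> real" where
  "delta_can n m = (real n - 2 - (\<Sum>i\<in>{1..n}. 1 / real (m i))) / 2"

end

theory Submission
  imports Defs
begin

(* Put x_{i,0} = d_0 and x_{i,m_i} = d_inf. The Ringel form splits along the arms:
     2 <d,d> = sum_i sum_{j<m_i} (x_{i,j+1} - x_{i,j})^2 - (n - 2) (d_0 - d_inf)^2.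
   On each arm the m_i increments add up to d_inf - d_0, so by Cauchy-Schwarz their squares
   add up to at least (d_0 - d_inf)^2 / m_i, with equality exactly when all increments are
   equal, i.e. when the arm interpolates linearly between d_0 and d_inf. Summing over the
   arms gives the bound -delta (d_0 - d_inf)^2 and its equality case. *)

lemma sum_squares_ge_square_sum_div_card:
  fixes u :: "'a \<Rightarrow> real"
  assumes "finite A" "A \<noteq> {}"
  shows "(\<Sum>j\<in>A. u j)\<^sup>2 / card A \<le> (\<Sum>j\<in>A. (u j)\<^sup>2)"
    and "(\<Sum>j\<in>A. (u j)\<^sup>2) = (\<Sum>j\<in>A. u j)\<^sup>2 / card A \<longleftrightarrow> (\<forall>j\<in>A. u j = (\<Sum>j\<in>A. u j) / card A)"
proof -
  define s where "s = (\<Sum>j\<in>A. u j)"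
  define c where "c = s / card A"
  have card: "real (card A) > 0"
    using assms by (simp add: card_gt_0_iff)
  have "(\<Sum>j\<in>A. (u j - c)\<^sup>2) = (\<Sum>j\<in>A. (u j)\<^sup>2 - 2 * c * u j + c\<^sup>2)"
    by (intro sum.cong) (simp_all add: power2_diff algebra_simps)
  also have "\<dots> = (\<Sum>j\<in>A. (u j)\<^sup>2) - 2 * c * s + card A * c\<^sup>2"
    by (simp add: sum.distrib sum_subtractf sum_distrib_left s_def)
  also have "\<dots> = (\<Sum>j\<in>A. (u j)\<^sup>2) - s\<^sup>2 / card A"
    using card by (simp add: c_def power2_eq_square field_simps)
  finally have deviation: "(\<Sum>j\<in>A. (u j - c)\<^sup>2) = (\<Sum>j\<in>A. (u j)\<^sup>2) - s\<^sup>2 / card A" .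
  have "(\<Sum>j\<in>A. (u j - c)\<^sup>2) \<ge> 0"
    by (simp add: sum_nonneg)
  then show "s\<^sup>2 / card A \<le> (\<Sum>j\<in>A. (u j)\<^sup>2)"
    using deviation by simp
  have "(\<Sum>j\<in>A. (u j - c)\<^sup>2) = 0 \<longleftrightarrow> (\<forall>j\<in>A. u j = c)"
    using assms(1) by (subst sum_nonneg_eq_0_iff) auto
  then show "(\<Sum>j\<in>A. (u j)\<^sup>2) = s\<^sup>2 / card A \<longleftrightarrow> (\<forall>j\<in>A. u j = s / card A)"
    using deviation by (simp add: c_def)
qed

lemma constant_increments_iff:
  fixes x :: "nat \<Rightarrow> 'a::comm_ring_1"
  shows "(\<forall>j<k. x (Suc j) - x j = c) \<longleftrightarrow> (\<forall>j\<le>k. x j = x 0 + of_nat j * c)"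
proof
  assume step: "\<forall>j<k. x (Suc j) - x j = c"
  show "\<forall>j\<le>k. x j = x 0 + of_nat j * c"
  proof (intro allI impI)
    fix j assume "j \<le> k"
    then show "x j = x 0 + of_nat j * c"
    proof (induction j)
      case (Suc j)
      have "x (Suc j) - x j = c"
        using step Suc.prems by simp
      with Suc show ?case
        by (simp add: algebra_simps)
    qed simp
  qed
next
  assume progression: "\<forall>j\<le>k. x j = x 0 + of_nat j * c"
  show "\<forall>j<k. x (Suc j) - x j = c"
  proof (intro allI impI)
    fix j assume "j < k"
    then have "x (Suc j) = x 0 + of_nat (Suc j) * c" and "x j = x 0 + of_nat j * c"
      using progression Suc_leI less_imp_le by blast+
    then show "x (Suc j) - x j = c"
      by (simp add: algebra_simps)
  qed
qed

lemma sum_squared_increments_expand: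
  fixes x :: "nat \<Rightarrow> 'a::comm_ring_1"
  shows "(\<Sum>j<k. (x (Suc j) - x j)\<^sup>2)
    = (x 0)\<^sup>2 - (x k)\<^sup>2 + 2 * (\<Sum>j<k. (x (Suc j))\<^sup>2 - x (Suc j) * x j)"
  by (induction k) (simp_all add: power2_eq_square algebra_simps)

lemma sum_squared_increments_ge:
  fixes x :: "nat \<Rightarrow> real"
  assumes "k > 0"
  shows "(x k - x 0)\<^sup>2 / k \<le> (\<Sum>j<k. (x (Suc j) - x j)\<^sup>2)"
    and "(\<Sum>j<k. (x (Suc j) - x j)\<^sup>2) = (x k - x 0)\<^sup>2 / k
      \<longleftrightarrow> (\<forall>j\<le>k. x j = x 0 + j * ((x k - x 0) / k))"
proof -
  have "{..<k} \<noteq> {}"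
    using assms by auto
  note cauchy_schwarz = sum_squares_ge_square_sum_div_card[OF finite_lessThan this,
      of "\<lambda>j. x (Suc j) - x j", unfolded sum_lessThan_telescope card_lessThan]
  then show "(x k - x 0)\<^sup>2 / k \<le> (\<Sum>j<k. (x (Suc j) - x j)\<^sup>2)"
    by simp
  show "(\<Sum>j<k. (x (Suc j) - x j)\<^sup>2) = (x k - x 0)\<^sup>2 / k
      \<longleftrightarrow> (\<forall>j\<le>k. x j = x 0 + j * ((x k - x 0) / k))"
    using cauchy_schwarz(2) constant_increments_iff[of k x "(x k - x 0) / k"] by (simp add: Ball_def)
qed

definition arm_energy :: "(nat \<Rightarrow> nat) \<Rightarrow> (vertex \<Rightarrow> int) \<Rightarrow> nat \<Rightarrow> int" where
  "arm_energy m d i = (\<Sum>j<m i. (dcoord m d i (Suc j) - dcoord m d i j)\<^sup>2)"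

lemma dcoord_0 [simp]: "dcoord m d i 0 = d V0"
  by (simp add: dcoord_def)

lemma dcoord_top [simp]: "m i > 0 \<Longrightarrow> dcoord m d i (m i) = d VInf"
  by (simp add: dcoord_def)

lemma dcoord_Arm: "j \<in> {1..m i - 1} \<Longrightarrow> dcoord m d i j = d (Arm i j)"
  by (auto simp: dcoord_def)

lemma ringel_form_arm_double:
  assumes "m i > 0"
  shows "2 * ((\<Sum>j\<in>{1..m i - 1}. d (Arm i j) * d (Arm i j))
      - (\<Sum>j\<in>{1..m i}. dcoord m d i j * dcoord m d i (j - 1)))
    = arm_energy m d i - (d V0)\<^sup>2 - (d VInf)\<^sup>2"
proof -
  define x where "x = dcoord m d i"
  obtain l where l: "m i = Suc l"
    using assms gr0_implies_Suc by blast
  have "(\<Sum>j\<in>{1..m i - 1}. d (Arm i j) * d (Arm i j)) = (\<Sum>j\<in>{1..l}. (x j)\<^sup>2)"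
    using l by (intro sum.cong) (simp_all add: x_def dcoord_Arm power2_eq_square)
  also have "\<dots> = (\<Sum>j<l. (x (Suc j))\<^sup>2)"
    by (simp add: sum.atLeast1_atMost_eq)
  finally have interior_squares:
    "(\<Sum>j\<in>{1..m i - 1}. d (Arm i j) * d (Arm i j)) = (\<Sum>j<l. (x (Suc j))\<^sup>2)" .
  have all_squares: "(\<Sum>j<m i. (x (Suc j))\<^sup>2) = (\<Sum>j<l. (x (Suc j))\<^sup>2) + (d VInf)\<^sup>2"
    using l dcoord_top[of m i d] by (simp add: x_def)
  have products: "(\<Sum>j\<in>{1..m i}. x j * x (j - 1)) = (\<Sum>j<m i. x (Suc j) * x j)"
    by (simp add: sum.atLeast1_atMost_eq)
  show ?thesis
    using sum_squared_increments_expand[of x "m i"] interior_squares all_squares products assms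
    by (simp add: arm_energy_def x_def sum_subtractf algebra_simps)
qed

lemma ringel_form_diag_double:
  assumes "\<forall>i\<in>{1..n}. m i > 0"
  shows "2 * ringel_form n m d d
    = (\<Sum>i\<in>{1..n}. arm_energy m d i) - (int n - 2) * (d V0 - d VInf)\<^sup>2"
proof -
  define a where "a = d V0"
  define b where "b = d VInf"
  have "2 * ((\<Sum>i\<in>{1..n}. \<Sum>j\<in>{1..m i - 1}. d (Arm i j) * d (Arm i j))
      - (\<Sum>i\<in>{1..n}. \<Sum>j\<in>{1..m i}. dcoord m d i j * dcoord m d i (j - 1)))
    = (\<Sum>i\<in>{1..n}. 2 * ((\<Sum>j\<in>{1..m i - 1}. d (Arm i j) * d (Arm i j))
      - (\<Sum>j\<in>{1..m i}. dcoord m d i j * dcoord m d i (j - 1))))"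
    by (simp add: sum_distrib_left sum_subtractf)
  also have "\<dots> = (\<Sum>i\<in>{1..n}. arm_energy m d i - a\<^sup>2 - b\<^sup>2)"
    unfolding a_def b_def using assms by (intro sum.cong refl ringel_form_arm_double) auto
  also have "\<dots> = (\<Sum>i\<in>{1..n}. arm_energy m d i) - int n * (a\<^sup>2 + b\<^sup>2)"
    by (simp add: sum_subtractf algebra_simps)
  finally show ?thesis
    unfolding ringel_form_def a_def[symmetric] b_def[symmetric]
    by (simp add: power2_eq_square algebra_simps)
qed

lemma dcoord_interpolation_iff:
  assumes "m i > 0"
  shows "(\<forall>j\<le>m i. real_of_int (dcoord m d i j) = d V0 + j * ((d VInf - d V0) / m i))
    \<longleftrightarrow> (\<forall>j\<in>{1..m i - 1}. real_of_int (d (Arm i j))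
          = (real (m i - j) * real_of_int (d V0) + real j * real_of_int (d VInf)) / real (m i))"
    (is "(\<forall>j\<le>m i. ?lhs j = ?line j) \<longleftrightarrow> _")
proof -
  have line: "?line j = (real (m i - j) * d V0 + real j * d VInf) / real (m i)" if "j \<le> m i" for j
    using that assms by (simp add: of_nat_diff field_simps)
  have ends: "?lhs 0 = ?line 0" "?lhs (m i) = ?line (m i)"
    using assms by simp_all
  have "j \<le> m i \<longleftrightarrow> j = 0 \<or> j = m i \<or> j \<in> {1..m i - 1}" for j
    by auto
  then show ?thesis
    using line ends dcoord_Arm[of _ m i d] by (auto simp del: of_int_diff)
qed

lemma arm_energy_ge:
  assumes "m i > 0"
  shows "(real_of_int (d VInf - d V0))\<^sup>2 / m i \<le> real_of_int (arm_energy m d i)"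
    and "real_of_int (arm_energy m d i) = (real_of_int (d VInf - d V0))\<^sup>2 / m i
      \<longleftrightarrow> (\<forall>j\<in>{1..m i - 1}. real_of_int (d (Arm i j))
          = (real (m i - j) * real_of_int (d V0) + real j * real_of_int (d VInf)) / real (m i))"
  using sum_squared_increments_ge[OF assms, of "\<lambda>j. real_of_int (dcoord m d i j)"]
    dcoord_interpolation_iff[of m i d] assms
  by (simp_all add: arm_energy_def)

theorem lemma1p7:
  fixes n :: nat and m :: "nat \<Rightarrow> nat" and d :: "vertex \<Rightarrow> int"
  assumes "n \<ge> 3"
    and "\<forall>i\<in>{1..n}. m i \<ge> 2"
  shows "real_of_int (ringel_form n m d d) \<ge> - delta_can n m * (real_of_int (d V0 - d VInf))\<^sup>2
    \<and> (real_of_int (ringel_form n m d d) = - delta_can n m * (real_of_int (d V0 - d VInf))\<^sup>2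
       \<longleftrightarrow> (\<forall>i\<in>{1..n}. \<forall>j\<in>{1..m i - 1}.
             real_of_int (d (Arm i j)) =
               (real (m i - j) * real_of_int (d V0) + real j * real_of_int (d VInf)) / real (m i)))"
proof -
  have arms_nonempty: "\<forall>i\<in>{1..n}. m i > 0"
    using assms(2) by fastforce
  define excess where
    "excess i = real_of_int (arm_energy m d i) - (real_of_int (d VInf - d V0))\<^sup>2 / m i" for i
  have "2 * real_of_int (ringel_form n m d d)
      = (\<Sum>i\<in>{1..n}. real_of_int (arm_energy m d i))
        - (real n - 2) * (real_of_int (d V0 - d VInf))\<^sup>2"
    using arg_cong[OF ringel_form_diag_double[OF arms_nonempty, of d], of real_of_int] by simp
  moreover have "(\<Sum>i\<in>{1..n}. (real_of_int (d VInf - d V0))\<^sup>2 / m i)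
      = (\<Sum>i\<in>{1..n}. 1 / real (m i)) * (real_of_int (d V0 - d VInf))\<^sup>2"
    by (simp add: sum_distrib_right power2_commute)
  ultimately have decomposition:
    "real_of_int (ringel_form n m d d) + delta_can n m * (real_of_int (d V0 - d VInf))\<^sup>2
      = (\<Sum>i\<in>{1..n}. excess i) / 2"
    unfolding excess_def delta_can_def
    by (simp add: sum_subtractf field_simps)
  have "excess i \<ge> 0" and "excess i = 0 \<longleftrightarrow> (\<forall>j\<in>{1..m i - 1}. real_of_int (d (Arm i j))
      = (real (m i - j) * real_of_int (d V0) + real j * real_of_int (d VInf)) / real (m i))"
    if "i \<in> {1..n}" for i
    using arm_energy_ge[of m i d] arms_nonempty that by (auto simp: excess_def)
  moreover from this have "(\<Sum>i\<in>{1..n}. excess i) = 0 \<longleftrightarrow> (\<forall>i\<in>{1..n}. excess i = 0)"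
    by (intro sum_nonneg_eq_0_iff) auto
  ultimately show ?thesis
    using decomposition sum_nonneg[of "{1..n}" excess] by auto
qed

end
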